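(* Let $(\Omega,+)$ be a group, $b$ a subgroup and $y\subseteq\Omega$ with $y\top b$. Then the set ${}^\top b=\{x\subseteq\Omega:x\top b\}$ is stable under the ternary law $(x,u,z)\mapsto\Sigma(b,x,u,z)$ and with the induced law is a torsor, denoted $U_b$; and there are natural torsor isomorphisms between: (1) $U_b$; (2) the set of (images of) sections $\sigma:\Omega/b\to\Omega$ of the canonical projection $\Omega\to\Omega/b$ onto left cosets, with pointwise torsor law $(\sigma\sigma'\sigma'')(u)=\sigma(u)-\sigma'(u)+\sigma''(u)$; (3) the set $\mathrm{Map}(y,b)$ of maps $y\to b$ with pointwise torsor law $(F,F',F'')\mapsto F-F'+F''$. (The isomorphism (2)$\to$(1) sends $\sigma$ to its image; (3)$\to$(1) sends $F$ to $\{\eta+F(\eta):\eta\in y\}$.) Similarly, the set $b^\top=\{x:b\top x\}$, denoted $\check U_b$, is a torsor which can be identified with the set of sections of the projection $\Omega\to b\backslash\Omega$ onto right cosets, with its pointwise torsor structure.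
   Context: $(\Omega,+)$ is a group written additively but not necessarily abelian. For subsets $x,y$, $x\top y$ means every $\omega\in\Omega$ has a unique decomposition $\omega=\xi+\eta$ with $\xi\in x,\eta\in y$. $\Sigma(b,x,u,z)=\{\omega:\exists\beta,\beta'\in b:\ \omega+\beta\in x,\ \omega+\beta'+\beta\in u,\ \omega+\beta'\in z\}$. A torsor is a set $G$ with a map $(x,y,z)\mapsto(xyz)$ satisfying $(xy(zuv))=(x(uzy)v)=((xyz)uv)$ and $(xxy)=y=(yxx)$. *)

theory Defs
  imports "HOL-Library.FuncSet"
begin

text \<open>The group \<Omega> is the whole type 'a of class group_add (not necessarily abelian).\<close>

definition subgrp :: "'a::group_add set \<Rightarrow> bool" where
  "subgrp b \<longleftrightarrow> 0 \<in> b \<and> (\<forall>x\<in>b. \<forall>y\<in>b. x + y \<in> b) \<and> (\<forall>x\<in>b. - x \<in> b)"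

definition top :: "'a::group_add set \<Rightarrow> 'a set \<Rightarrow> bool" where
  "top x y \<longleftrightarrow> (\<forall>\<omega>. \<exists>!p. fst p \<in> x \<and> snd p \<in> y \<and> \<omega> = fst p + snd p)"

definition Sigma_law :: "'a::group_add set \<Rightarrow> 'a set \<Rightarrow> 'a set \<Rightarrow> 'a set \<Rightarrow> 'a set" where
  "Sigma_law b x u z = {\<omega>. \<exists>\<beta>\<in>b. \<exists>\<beta>'\<in>b. \<omega> + \<beta> \<in> x \<and> \<omega> + \<beta>' + \<beta> \<in> u \<and> \<omega> + \<beta>' \<in> z}"

definition torsor_on :: "'g set \<Rightarrow> ('g \<Rightarrow> 'g \<Rightarrow> 'g \<Rightarrow> 'g) \<Rightarrow> bool" where
  "torsor_on G m \<longleftrightarrow>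
     (\<forall>x\<in>G. \<forall>y\<in>G. \<forall>z\<in>G. m x y z \<in> G) \<and>
     (\<forall>x\<in>G. \<forall>y\<in>G. \<forall>z\<in>G. \<forall>u\<in>G. \<forall>v\<in>G.
        m x y (m z u v) = m x (m u z y) v \<and> m x (m u z y) v = m (m x y z) u v) \<and>
     (\<forall>x\<in>G. \<forall>y\<in>G. m x x y = y \<and> m y x x = y)"

definition torsor_iso ::
  "'g set \<Rightarrow> ('g \<Rightarrow> 'g \<Rightarrow> 'g \<Rightarrow> 'g) \<Rightarrow> 'h set \<Rightarrow> ('h \<Rightarrow> 'h \<Rightarrow> 'h \<Rightarrow> 'h) \<Rightarrow> ('g \<Rightarrow> 'h) \<Rightarrow> bool" where
  "torsor_iso G m H n f \<longleftrightarrow> bij_betw f G H \<and>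
     (\<forall>x\<in>G. \<forall>y\<in>G. \<forall>z\<in>G. f (m x y z) = n (f x) (f y) (f z))"

definition left_cosets :: "'a::group_add set \<Rightarrow> 'a set set" where
  "left_cosets b = {(\<lambda>\<beta>. \<omega> + \<beta>) ` b | \<omega>. True}"

definition right_cosets :: "'a::group_add set \<Rightarrow> 'a set set" where
  "right_cosets b = {(\<lambda>\<beta>. \<beta> + \<omega>) ` b | \<omega>. True}"

text \<open>Sections of the canonical projection \<Omega> \<rightarrow> Q (Q a set of cosets partitioning \<Omega>),
  i.e. maps \<sigma> : Q \<rightarrow> \<Omega> with \<sigma>(C) \<in> C (so that \<pi>(\<sigma>(C)) = C), represented extensionally.\<close>
definition sections :: "'a set set \<Rightarrow> ('a set \<Rightarrow> 'a) set" where
  "sections Q = {\<sigma> \<in> Q \<rightarrow>\<^sub>E UNIV. \<forall>C\<in>Q. \<sigma> C \<in> C}"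

definition pointwise_law :: "'c set \<Rightarrow> ('c \<Rightarrow> 'a::group_add) \<Rightarrow> ('c \<Rightarrow> 'a) \<Rightarrow> ('c \<Rightarrow> 'a) \<Rightarrow> ('c \<Rightarrow> 'a)" where
  "pointwise_law D f g h = (\<lambda>c\<in>D. f c - g c + h c)"

end

theory Submission
  imports Defs "HOL-Library.Disjoint_Sets"
begin

text \<open>A set x with x \<top> b is the same thing as a transversal of the left cosets \<omega> + b,
  i.e. the image of a section of \<Omega> \<rightarrow> \<Omega>/b. Sections form a torsor under the pointwise law
  \<sigma> - \<sigma>' + \<sigma>'', because each coset is closed under (x, y, z) \<mapsto> x - y + z, and taking images
  turns this law into \<Sigma>(b, -, -, -); so the complements inherit the torsor structure.
  A fixed complement y meets every coset in one point \<eta>, and a section is then the same as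
  the map y \<rightarrow> b recording the offset -\<eta> + \<sigma>(\<eta> + b).\<close>

section \<open>Torsors\<close>

lemma torsor_on_pointwise_law:
  fixes S :: "('c \<Rightarrow> 'a::group_add) set"
  assumes "S \<subseteq> extensional D"
    and "\<And>f g h. f \<in> S \<Longrightarrow> g \<in> S \<Longrightarrow> h \<in> S \<Longrightarrow> pointwise_law D f g h \<in> S"
  shows "torsor_on S (pointwise_law D)"
proof -
  have "pointwise_law D f g (pointwise_law D h k l) = pointwise_law D f (pointwise_law D k h g) l"
    "pointwise_law D f (pointwise_law D k h g) l = pointwise_law D (pointwise_law D f g h) k l"
    for f g h k l :: "'c \<Rightarrow> 'a"
    by (simp_all add: pointwise_law_def fun_eq_iff diff_conv_add_uminus minus_add add.assoc
        del: add_uminus_conv_diff)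
  moreover have "pointwise_law D f f g = g" "pointwise_law D g f f = g" if "f \<in> S" "g \<in> S" for f g
    using that assms(1) by (auto simp: pointwise_law_def fun_eq_iff extensional_def)
  ultimately show ?thesis
    using assms(2) unfolding torsor_on_def by simp
qed

lemma torsor_on_iso_image:
  assumes "torsor_on G m" and "torsor_iso G m H n f"
  shows "torsor_on H n"
proof -
  have H: "H = f ` G"
    and hom: "\<And>x y z. x\<in>G \<Longrightarrow> y\<in>G \<Longrightarrow> z\<in>G \<Longrightarrow> n (f x) (f y) (f z) = f (m x y z)"
    using assms(2) unfolding torsor_iso_def bij_betw_def by auto
  have closed: "\<And>x y z. x\<in>G \<Longrightarrow> y\<in>G \<Longrightarrow> z\<in>G \<Longrightarrow> m x y z \<in> G"
    and assoc1: "\<And>x y z u v. x\<in>G \<Longrightarrow> y\<in>G \<Longrightarrow> z\<in>G \<Longrightarrow> u\<in>G \<Longrightarrow> v\<in>G \<Longrightarrow>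
      m x y (m z u v) = m x (m u z y) v"
    and assoc2: "\<And>x y z u v. x\<in>G \<Longrightarrow> y\<in>G \<Longrightarrow> z\<in>G \<Longrightarrow> u\<in>G \<Longrightarrow> v\<in>G \<Longrightarrow>
      m x (m u z y) v = m (m x y z) u v"
    and cancel: "\<And>x y. x\<in>G \<Longrightarrow> y\<in>G \<Longrightarrow> m x x y = y \<and> m y x x = y"
    using assms(1) unfolding torsor_on_def by blast+
  show ?thesis
    unfolding torsor_on_def H ball_simps(9)
    by (simp add: hom closed assoc1 cancel) (metis assoc2 closed hom)
qed

lemma torsor_iso_comp:
  assumes "torsor_iso G m H n f" and "torsor_iso H n K k g"
  shows "torsor_iso G m K k (g \<circ> f)"
  using assms unfolding torsor_iso_def
  by (auto intro: bij_betw_trans simp: bij_betw_apply)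

lemma torsor_iso_transfer:
  assumes "torsor_on G m" and "bij_betw f G H"
  obtains n where "torsor_on H n" and "torsor_iso G m H n f"
proof -
  define n where "n x y z = f (m (inv_into G f x) (inv_into G f y) (inv_into G f z))" for x y z
  have "torsor_iso G m H n f"
    using assms(2) unfolding torsor_iso_def n_def by (simp add: bij_betw_inv_into_left)
  with assms(1) show thesis
    using that torsor_on_iso_image by blast
qed

section \<open>Sections and transversals of a partition\<close>

definition transversal :: "'a set set \<Rightarrow> 'a set \<Rightarrow> bool" where
  "transversal Q x \<longleftrightarrow> x \<subseteq> \<Union>Q \<and> (\<forall>C\<in>Q. \<exists>!\<xi>. \<xi> \<in> x \<and> \<xi> \<in> C)"

definition transversal_section :: "'a set set \<Rightarrow> 'a set \<Rightarrow> 'a set \<Rightarrow> 'a" where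
  "transversal_section Q x = (\<lambda>C\<in>Q. the_elem (x \<inter> C))"

lemma section_in_class: "\<sigma> \<in> sections Q \<Longrightarrow> C \<in> Q \<Longrightarrow> \<sigma> C \<in> C"
  unfolding sections_def by blast

lemma partition_on_class_unique:
  assumes "partition_on A Q" and "C \<in> Q" "C' \<in> Q" and "\<xi> \<in> C" "\<xi> \<in> C'"
  shows "C = C'"
  using assms partition_onD2[OF assms(1)] by (auto simp: disjoint_def)

lemma transversal_section_eq:
  assumes "transversal Q x" and "C \<in> Q" and "\<xi> \<in> x" "\<xi> \<in> C"
  shows "transversal_section Q x C = \<xi>"
proof -
  have "x \<inter> C = {\<xi>}"
    using assms unfolding transversal_def by blast
  with assms(2) show ?thesis
    by (simp add: transversal_section_def)
qed

lemma transversal_section_mem: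
  assumes "transversal Q x" and "C \<in> Q"
  shows "transversal_section Q x C \<in> x \<inter> C"
proof -
  obtain \<xi> where "\<xi> \<in> x" "\<xi> \<in> C"
    using assms unfolding transversal_def by blast
  with transversal_section_eq[OF assms] show ?thesis
    by simp
qed

lemma transversal_section_in_sections:
  "transversal Q x \<Longrightarrow> transversal_section Q x \<in> sections Q"
  using transversal_section_mem by (fastforce simp: sections_def transversal_section_def)

lemma image_transversal_section:
  assumes "transversal Q x"
  shows "transversal_section Q x ` Q = x"
proof
  show "transversal_section Q x ` Q \<subseteq> x"
    using transversal_section_mem[OF assms] by blast
  show "x \<subseteq> transversal_section Q x ` Q"
  proof
    fix \<xi> assume "\<xi> \<in> x"
    then obtain C where "C \<in> Q" "\<xi> \<in> C"
      using assms unfolding transversal_def by blast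
    with transversal_section_eq[OF assms] \<open>\<xi> \<in> x\<close> show "\<xi> \<in> transversal_section Q x ` Q"
      by (metis imageI)
  qed
qed

lemma transversal_image_section:
  assumes "partition_on A Q" and "\<sigma> \<in> sections Q"
  shows "transversal Q (\<sigma> ` Q)"
proof -
  note \<sigma> = section_in_class[OF assms(2)]
  have unique: "\<xi> = \<sigma> C" if C: "C \<in> Q" "\<xi> \<in> C" and "\<xi> \<in> \<sigma> ` Q" for C \<xi>
  proof -
    obtain C' where "C' \<in> Q" "\<xi> = \<sigma> C'" using \<open>\<xi> \<in> \<sigma> ` Q\<close> by blast
    with \<sigma> C have "C' = C"
      using partition_on_class_unique[OF assms(1)] by metis
    with \<open>\<xi> = \<sigma> C'\<close> show ?thesis by simp
  qed
  show ?thesis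
    unfolding transversal_def
  proof (intro conjI ballI)
    show "\<sigma> ` Q \<subseteq> \<Union>Q"
      using \<sigma> by blast
    fix C assume "C \<in> Q"
    with \<sigma> unique show "\<exists>!\<xi>. \<xi> \<in> \<sigma> ` Q \<and> \<xi> \<in> C"
      by (intro ex1I[of _ "\<sigma> C"]) auto
  qed
qed

lemma transversal_section_image:
  assumes "partition_on A Q" and "\<sigma> \<in> sections Q"
  shows "transversal_section Q (\<sigma> ` Q) = \<sigma>"
proof
  fix C
  show "transversal_section Q (\<sigma> ` Q) C = \<sigma> C"
  proof (cases "C \<in> Q")
    case True
    then show ?thesis
      using transversal_section_eq[OF transversal_image_section[OF assms]] section_in_class[OF assms(2)]
      by blast
  next
    case False
    with assms(2) show ?thesis
      by (simp add: transversal_section_def sections_def PiE_def extensional_def)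
  qed
qed

lemma bij_betw_image_sections:
  assumes "partition_on A Q"
  shows "bij_betw (\<lambda>\<sigma>. \<sigma> ` Q) (sections Q) (Collect (transversal Q))"
  by (rule bij_betwI[where g = "transversal_section Q"])
    (auto simp: transversal_image_section[OF assms] transversal_section_image[OF assms]
      transversal_section_in_sections image_transversal_section)

lemma torsor_on_sections:
  fixes Q :: "'a::group_add set set"
  assumes "\<And>C x y z. C \<in> Q \<Longrightarrow> x \<in> C \<Longrightarrow> y \<in> C \<Longrightarrow> z \<in> C \<Longrightarrow> x - y + z \<in> C"
  shows "torsor_on (sections Q) (pointwise_law Q)"
proof (rule torsor_on_pointwise_law)
  show "sections Q \<subseteq> extensional Q"
    by (auto simp: sections_def PiE_def)
  fix \<sigma> \<sigma>' \<sigma>'' assume "\<sigma> \<in> sections Q" "\<sigma>' \<in> sections Q" "\<sigma>'' \<in> sections Q"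
  then show "pointwise_law Q \<sigma> \<sigma>' \<sigma>'' \<in> sections Q"
    using assms by (simp add: sections_def pointwise_law_def)
qed

section \<open>Complements of a subgroup and its cosets\<close>

lemma ex1_graph_iff: "(\<exists>!p. P (fst p) \<and> snd p = g (fst p)) \<longleftrightarrow> (\<exists>!a. P a)"
proof
  assume "\<exists>!p. P (fst p) \<and> snd p = g (fst p)"
  then obtain p where p: "P (fst p)" and unique: "\<And>q. P (fst q) \<and> snd q = g (fst q) \<Longrightarrow> q = p"
    by blast
  show "\<exists>!a. P a"
  proof (rule ex1I[of _ "fst p"])
    fix a assume "P a"
    then have "(a, g a) = p" by (intro unique) simp
    then show "a = fst p" by auto
  qed (rule p)
next
  assume "\<exists>!a. P a"
  then obtain a where a: "P a" and unique: "\<And>a'. P a' \<Longrightarrow> a' = a"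
    by blast
  show "\<exists>!p. P (fst p) \<and> snd p = g (fst p)"
  proof (rule ex1I[of _ "(a, g a)"])
    fix q assume q: "P (fst q) \<and> snd q = g (fst q)"
    then have "fst q = a" using unique by blast
    with q show "q = (a, g a)" by (simp add: prod_eq_iff)
  qed (simp add: a)
qed

lemma ex1_graph_swap_iff: "(\<exists>!p. P (snd p) \<and> fst p = g (snd p)) \<longleftrightarrow> (\<exists>!a. P a)"
proof
  assume "\<exists>!p. P (snd p) \<and> fst p = g (snd p)"
  then obtain p where p: "P (snd p)" and unique: "\<And>q. P (snd q) \<and> fst q = g (snd q) \<Longrightarrow> q = p"
    by blast
  show "\<exists>!a. P a"
  proof (rule ex1I[of _ "snd p"])
    fix a assume "P a"
    then have "(g a, a) = p" by (intro unique) simp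
    then show "a = snd p" by auto
  qed (rule p)
next
  assume "\<exists>!a. P a"
  then obtain a where a: "P a" and unique: "\<And>a'. P a' \<Longrightarrow> a' = a"
    by blast
  show "\<exists>!p. P (snd p) \<and> fst p = g (snd p)"
  proof (rule ex1I[of _ "(g a, a)"])
    fix q assume q: "P (snd q) \<and> fst q = g (snd q)"
    then have "snd q = a" using unique by blast
    with q show "q = (g a, a)" by (simp add: prod_eq_iff)
  qed (simp add: a)
qed

lemma top_iff_unique_left_factor:
  "top x y \<longleftrightarrow> (\<forall>\<omega>. \<exists>!\<xi>. \<xi> \<in> x \<and> - \<xi> + \<omega> \<in> y)"
proof -
  have factor: "(fst p \<in> x \<and> snd p \<in> y \<and> \<omega> = fst p + snd p)
      \<longleftrightarrow> (fst p \<in> x \<and> - fst p + \<omega> \<in> y) \<and> snd p = - fst p + \<omega>" for \<omega> p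
    by (auto simp: add.assoc[symmetric])
  have "(\<exists>!p. fst p \<in> x \<and> snd p \<in> y \<and> \<omega> = fst p + snd p) \<longleftrightarrow> (\<exists>!\<xi>. \<xi> \<in> x \<and> - \<xi> + \<omega> \<in> y)" for \<omega>
    using ex1_graph_iff[of "\<lambda>\<xi>. \<xi> \<in> x \<and> - \<xi> + \<omega> \<in> y" "\<lambda>\<xi>. - \<xi> + \<omega>"]
    by (simp only: factor)
  then show ?thesis
    unfolding top_def by simp
qed

lemma top_iff_unique_right_factor:
  "top y x \<longleftrightarrow> (\<forall>\<omega>. \<exists>!\<xi>. \<xi> \<in> x \<and> \<omega> + - \<xi> \<in> y)"
proof -
  have factor: "(fst p \<in> y \<and> snd p \<in> x \<and> \<omega> = fst p + snd p)
      \<longleftrightarrow> (snd p \<in> x \<and> \<omega> + - snd p \<in> y) \<and> fst p = \<omega> + - snd p" for \<omega> p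
    by (auto simp: add.assoc)
  have "(\<exists>!p. fst p \<in> y \<and> snd p \<in> x \<and> \<omega> = fst p + snd p) \<longleftrightarrow> (\<exists>!\<xi>. \<xi> \<in> x \<and> \<omega> + - \<xi> \<in> y)" for \<omega>
    using ex1_graph_swap_iff[of "\<lambda>\<xi>. \<xi> \<in> x \<and> \<omega> + - \<xi> \<in> y" "\<lambda>\<xi>. \<omega> + - \<xi>"]
    by (simp only: factor)
  then show ?thesis
    unfolding top_def by simp
qed

lemma subgrp_diff_add:
  assumes "subgrp b" and "x \<in> b" "y \<in> b" "z \<in> b"
  shows "x - y + z \<in> b"
  using assms unfolding subgrp_def diff_conv_add_uminus by blast

lemma subgrp_minus_iff: "subgrp b \<Longrightarrow> - x \<in> b \<longleftrightarrow> x \<in> b"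
  unfolding subgrp_def by (metis minus_minus)

lemma mem_left_coset_iff:
  fixes x y :: "'a::group_add"
  shows "y \<in> (\<lambda>\<beta>. x + \<beta>) ` b \<longleftrightarrow> - x + y \<in> b"
proof
  show "- x + y \<in> b \<Longrightarrow> y \<in> (\<lambda>\<beta>. x + \<beta>) ` b"
    by (rule image_eqI[where x = "- x + y"]) simp_all
qed auto

lemma mem_right_coset_iff:
  fixes x y :: "'a::group_add"
  shows "y \<in> (\<lambda>\<beta>. \<beta> + x) ` b \<longleftrightarrow> y - x \<in> b"
proof
  show "y - x \<in> b \<Longrightarrow> y \<in> (\<lambda>\<beta>. \<beta> + x) ` b"
    by (rule image_eqI[where x = "y - x"]) simp_all
qed auto

lemma left_coset_eq:
  assumes "subgrp b" and "C \<in> left_cosets b" and "x \<in> C"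
  shows "C = (\<lambda>\<beta>. x + \<beta>) ` b"
proof -
  obtain \<omega> where C: "C = (\<lambda>\<beta>. \<omega> + \<beta>) ` b"
    using assms(2) unfolding left_cosets_def by blast
  have "- x + y = - (- \<omega> + x) + (- \<omega> + y)" for y
    by (simp add: minus_add add.assoc)
  moreover have "- \<omega> + x \<in> b"
    using assms(3) C mem_left_coset_iff by blast
  ultimately have "- \<omega> + y \<in> b \<longleftrightarrow> - x + y \<in> b" for y
    using assms(1) unfolding subgrp_def by (metis add.assoc add_minus_cancel)
  then show ?thesis
    unfolding C set_eq_iff mem_left_coset_iff by blast
qed

lemma right_coset_eq:
  assumes "subgrp b" and "C \<in> right_cosets b" and "x \<in> C"
  shows "C = (\<lambda>\<beta>. \<beta> + x) ` b"
proof -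
  obtain \<omega> where C: "C = (\<lambda>\<beta>. \<beta> + \<omega>) ` b"
    using assms(2) unfolding right_cosets_def by blast
  have "y - x = (y - \<omega>) - (x - \<omega>)" for y
    by (simp add: diff_conv_add_uminus minus_add add.assoc del: add_uminus_conv_diff)
  moreover have "x - \<omega> \<in> b"
    using assms(3) C mem_right_coset_iff by blast
  ultimately have "y - \<omega> \<in> b \<longleftrightarrow> y - x \<in> b" for y
    using assms(1) unfolding subgrp_def by (metis diff_add_cancel diff_conv_add_uminus)
  then show ?thesis
    unfolding C set_eq_iff mem_right_coset_iff by blast
qed

lemma left_coset_mem_left_cosets:
  assumes "subgrp b"
  shows "(\<lambda>\<beta>. \<eta> + \<beta>) ` b \<in> left_cosets b" and "\<eta> \<in> (\<lambda>\<beta>. \<eta> + \<beta>) ` b"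
  using assms by (auto simp: left_cosets_def mem_left_coset_iff subgrp_def)

lemma partition_on_left_cosets:
  assumes "subgrp b"
  shows "partition_on UNIV (left_cosets b)"
proof (rule partition_onI)
  from left_coset_mem_left_cosets(2)[OF assms]
  show "\<Union>(left_cosets b) = UNIV" and "{} \<notin> left_cosets b"
    unfolding left_cosets_def by blast+
  fix C C' assume "C \<in> left_cosets b" "C' \<in> left_cosets b" "C \<noteq> C'"
  then show "disjnt C C'"
    using left_coset_eq[OF assms] by (metis disjnt_iff)
qed

lemma partition_on_right_cosets:
  assumes "subgrp b"
  shows "partition_on UNIV (right_cosets b)"
proof (rule partition_onI)
  have "\<omega> \<in> (\<lambda>\<beta>. \<beta> + \<omega>) ` b" for \<omega>
    using assms by (simp add: mem_right_coset_iff subgrp_def)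
  then show "\<Union>(right_cosets b) = UNIV" and "{} \<notin> right_cosets b"
    unfolding right_cosets_def by blast+
  fix C C' assume "C \<in> right_cosets b" "C' \<in> right_cosets b" "C \<noteq> C'"
  then show "disjnt C C'"
    using right_coset_eq[OF assms] by (metis disjnt_iff)
qed

lemma transversal_left_cosets_iff_top:
  assumes "subgrp b"
  shows "transversal (left_cosets b) x \<longleftrightarrow> top x b"
proof -
  have "\<xi> \<in> (\<lambda>\<beta>. \<omega> + \<beta>) ` b \<longleftrightarrow> - \<xi> + \<omega> \<in> b" for \<xi> \<omega>
    using subgrp_minus_iff[OF assms, of "- \<omega> + \<xi>"] by (simp add: mem_left_coset_iff minus_add)
  moreover have "(\<forall>C\<in>left_cosets b. P C) \<longleftrightarrow> (\<forall>\<omega>. P ((\<lambda>\<beta>. \<omega> + \<beta>) ` b))" for P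
    unfolding left_cosets_def by blast
  ultimately show ?thesis
    unfolding transversal_def top_iff_unique_left_factor partition_onD1[OF partition_on_left_cosets[OF assms], symmetric]
    by simp
qed

lemma transversal_right_cosets_iff_top:
  assumes "subgrp b"
  shows "transversal (right_cosets b) x \<longleftrightarrow> top b x"
proof -
  have "\<xi> \<in> (\<lambda>\<beta>. \<beta> + \<omega>) ` b \<longleftrightarrow> \<omega> - \<xi> \<in> b" for \<xi> \<omega>
    using subgrp_minus_iff[OF assms, of "\<xi> - \<omega>"] by (simp add: mem_right_coset_iff)
  moreover have "(\<forall>C\<in>right_cosets b. P C) \<longleftrightarrow> (\<forall>\<omega>. P ((\<lambda>\<beta>. \<beta> + \<omega>) ` b))" for P
    unfolding right_cosets_def by blast
  ultimately show ?thesis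
    unfolding transversal_def top_iff_unique_right_factor partition_onD1[OF partition_on_right_cosets[OF assms], symmetric]
    by simp
qed

lemma left_coset_diff_add_closed:
  assumes "subgrp b" and "C \<in> left_cosets b" and "x \<in> C" "y \<in> C" "z \<in> C"
  shows "x - y + z \<in> C"
proof -
  have C: "C = (\<lambda>\<beta>. x + \<beta>) ` b"
    using left_coset_eq[OF assms(1-3)] .
  have "- x + y \<in> b" "- x + z \<in> b"
    using assms(4,5) unfolding C mem_left_coset_iff by auto
  moreover have "- x + (x - y + z) = - (- x + y) + (- x + z)"
    by (simp add: diff_conv_add_uminus minus_add add.assoc del: add_uminus_conv_diff)
  ultimately show ?thesis
    using assms(1) unfolding C mem_left_coset_iff subgrp_def by metis
qed

lemma right_coset_diff_add_closed:
  assumes "subgrp b" and "C \<in> right_cosets b" and "x \<in> C" "y \<in> C" "z \<in> C"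
  shows "x - y + z \<in> C"
proof -
  have C: "C = (\<lambda>\<beta>. \<beta> + x) ` b"
    using right_coset_eq[OF assms(1-3)] .
  have "y - x \<in> b" "z - x \<in> b"
    using assms(4,5) unfolding C mem_right_coset_iff by auto
  moreover have "x - y + z - x = - (y - x) + (z - x)"
    by (simp add: diff_conv_add_uminus minus_add add.assoc del: add_uminus_conv_diff)
  ultimately show ?thesis
    using assms(1) unfolding C mem_right_coset_iff subgrp_def by metis
qed

lemma torsor_on_left_sections:
  assumes "subgrp b"
  shows "torsor_on (sections (left_cosets b)) (pointwise_law (left_cosets b))"
  by (rule torsor_on_sections) (rule left_coset_diff_add_closed[OF assms])

lemma torsor_on_right_sections:
  assumes "subgrp b"
  shows "torsor_on (sections (right_cosets b)) (pointwise_law (right_cosets b))"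
  by (rule torsor_on_sections) (rule right_coset_diff_add_closed[OF assms])

lemma image_pointwise_law_left_sections_subset:
  assumes b: "subgrp b"
    and \<sigma>: "\<sigma> \<in> sections (left_cosets b)" "\<sigma>' \<in> sections (left_cosets b)" "\<sigma>'' \<in> sections (left_cosets b)"
  shows "pointwise_law (left_cosets b) \<sigma> \<sigma>' \<sigma>'' ` left_cosets b
    \<subseteq> Sigma_law b (\<sigma> ` left_cosets b) (\<sigma>' ` left_cosets b) (\<sigma>'' ` left_cosets b)"
proof
  fix \<omega> assume "\<omega> \<in> pointwise_law (left_cosets b) \<sigma> \<sigma>' \<sigma>'' ` left_cosets b"
  then obtain C where C: "C \<in> left_cosets b" and \<omega>: "\<omega> = \<sigma> C - \<sigma>' C + \<sigma>'' C"
    by (auto simp: pointwise_law_def)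
  have in_C: "\<sigma> C \<in> C" "\<sigma>' C \<in> C" "\<sigma>'' C \<in> C"
    using section_in_class C \<sigma> by blast+
  then have "C = (\<lambda>\<beta>. \<omega> + \<beta>) ` b"
    using left_coset_eq[OF b C] left_coset_diff_add_closed[OF b C] \<omega> by blast
  then have \<beta>: "- \<omega> + \<sigma> C \<in> b" and \<beta>': "- \<omega> + \<sigma>'' C \<in> b"
    using in_C mem_left_coset_iff by blast+
  have "\<omega> + (- \<omega> + \<sigma>'' C) + (- \<omega> + \<sigma> C) = \<sigma>' C"
    unfolding \<omega> by (simp add: diff_conv_add_uminus minus_add add.assoc del: add_uminus_conv_diff)
  then show "\<omega> \<in> Sigma_law b (\<sigma> ` left_cosets b) (\<sigma>' ` left_cosets b) (\<sigma>'' ` left_cosets b)"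
    unfolding Sigma_law_def mem_Collect_eq using C
    by (intro bexI[OF _ \<beta>] bexI[OF _ \<beta>']) auto
qed

lemma Sigma_law_left_sections_subset:
  assumes b: "subgrp b"
    and \<sigma>: "\<sigma> \<in> sections (left_cosets b)" "\<sigma>' \<in> sections (left_cosets b)" "\<sigma>'' \<in> sections (left_cosets b)"
  shows "Sigma_law b (\<sigma> ` left_cosets b) (\<sigma>' ` left_cosets b) (\<sigma>'' ` left_cosets b)
    \<subseteq> pointwise_law (left_cosets b) \<sigma> \<sigma>' \<sigma>'' ` left_cosets b"
proof
  let ?Q = "left_cosets b"
  fix \<omega> assume "\<omega> \<in> Sigma_law b (\<sigma> ` ?Q) (\<sigma>' ` ?Q) (\<sigma>'' ` ?Q)"
  then obtain \<beta> \<beta>' C1 C2 C3 where "\<beta> \<in> b" "\<beta>' \<in> b"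
    and C123: "C1 \<in> ?Q" "C2 \<in> ?Q" "C3 \<in> ?Q"
    and \<sigma>C: "\<omega> + \<beta> = \<sigma> C1" "\<omega> + \<beta>' + \<beta> = \<sigma>' C2" "\<omega> + \<beta>' = \<sigma>'' C3"
    unfolding Sigma_law_def by blast
  define C where "C = (\<lambda>\<beta>. \<omega> + \<beta>) ` b"
  have C: "C \<in> ?Q"
    unfolding C_def left_cosets_def by blast
  have "\<beta>' + \<beta> \<in> b"
    using b \<open>\<beta> \<in> b\<close> \<open>\<beta>' \<in> b\<close> unfolding subgrp_def by blast
  then have "\<sigma> C1 \<in> C" "\<sigma>' C2 \<in> C" "\<sigma>'' C3 \<in> C"
    unfolding C_def mem_left_coset_iff \<sigma>C[symmetric] using \<open>\<beta> \<in> b\<close> \<open>\<beta>' \<in> b\<close>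
    by (simp_all add: add.assoc)
  then have "C1 = C" "C2 = C" "C3 = C"
    using partition_on_class_unique[OF partition_on_left_cosets[OF b]] C C123 section_in_class \<sigma>
    by metis+
  then have "pointwise_law ?Q \<sigma> \<sigma>' \<sigma>'' C = (\<omega> + \<beta>) - (\<omega> + \<beta>' + \<beta>) + (\<omega> + \<beta>')"
    using C \<sigma>C by (simp add: pointwise_law_def)
  also have "\<dots> = \<omega>"
    by (simp add: diff_conv_add_uminus minus_add add.assoc del: add_uminus_conv_diff)
  finally show "\<omega> \<in> pointwise_law ?Q \<sigma> \<sigma>' \<sigma>'' ` ?Q"
    using C by (metis imageI)
qed

lemma torsor_iso_left_sections_complements:
  assumes "subgrp b"
  shows "torsor_iso (sections (left_cosets b)) (pointwise_law (left_cosets b))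
    {x. top x b} (Sigma_law b) (\<lambda>\<sigma>. \<sigma> ` left_cosets b)"
proof -
  have "{x. top x b} = Collect (transversal (left_cosets b))"
    using transversal_left_cosets_iff_top[OF assms] by blast
  then have "bij_betw (\<lambda>\<sigma>. \<sigma> ` left_cosets b) (sections (left_cosets b)) {x. top x b}"
    using bij_betw_image_sections[OF partition_on_left_cosets[OF assms]] by simp
  moreover have "pointwise_law (left_cosets b) \<sigma> \<sigma>' \<sigma>'' ` left_cosets b
      = Sigma_law b (\<sigma> ` left_cosets b) (\<sigma>' ` left_cosets b) (\<sigma>'' ` left_cosets b)"
    if "\<sigma> \<in> sections (left_cosets b)" "\<sigma>' \<in> sections (left_cosets b)" "\<sigma>'' \<in> sections (left_cosets b)"
    for \<sigma> \<sigma>' \<sigma>''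
    using image_pointwise_law_left_sections_subset[OF assms that] Sigma_law_left_sections_subset[OF assms that]
    by (rule equalityI)
  ultimately show ?thesis
    unfolding torsor_iso_def by blast
qed

section \<open>Maps into the subgroup\<close>

definition section_of_map :: "'a::group_add set set \<Rightarrow> 'a set \<Rightarrow> ('a \<Rightarrow> 'a) \<Rightarrow> 'a set \<Rightarrow> 'a" where
  "section_of_map Q y F = (\<lambda>C\<in>Q. transversal_section Q y C + F (transversal_section Q y C))"

definition map_of_section :: "'a::group_add set \<Rightarrow> 'a set \<Rightarrow> ('a set \<Rightarrow> 'a) \<Rightarrow> 'a \<Rightarrow> 'a" where
  "map_of_section b y \<sigma> = (\<lambda>\<eta>\<in>y. - \<eta> + \<sigma> ((\<lambda>\<beta>. \<eta> + \<beta>) ` b))"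

lemma image_section_of_map:
  assumes "transversal Q y"
  shows "section_of_map Q y F ` Q = {\<eta> + F \<eta> | \<eta>. \<eta> \<in> y}"
proof -
  have "section_of_map Q y F ` Q = (\<lambda>\<eta>. \<eta> + F \<eta>) ` (transversal_section Q y ` Q)"
    by (auto simp: section_of_map_def image_image)
  then show ?thesis
    by (auto simp: image_transversal_section[OF assms])
qed

lemma section_of_map_pointwise_law:
  assumes "transversal Q y"
  shows "section_of_map Q y (pointwise_law y F F' F'')
    = pointwise_law Q (section_of_map Q y F) (section_of_map Q y F') (section_of_map Q y F'')"
proof
  fix C
  show "section_of_map Q y (pointwise_law y F F' F'') C
    = pointwise_law Q (section_of_map Q y F) (section_of_map Q y F') (section_of_map Q y F'') C"
    using transversal_section_mem[OF assms]
    by (simp add: section_of_map_def pointwise_law_def diff_conv_add_uminus minus_add add.assoc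
        del: add_uminus_conv_diff)
qed

lemma transversal_section_left_coset:
  assumes "subgrp b" and "transversal (left_cosets b) y" and "\<eta> \<in> y"
  shows "transversal_section (left_cosets b) y ((\<lambda>\<beta>. \<eta> + \<beta>) ` b) = \<eta>"
  using transversal_section_eq[OF assms(2) left_coset_mem_left_cosets(1)[OF assms(1)] assms(3)
      left_coset_mem_left_cosets(2)[OF assms(1)]] .

lemma left_coset_transversal_section:
  assumes "subgrp b" and "transversal (left_cosets b) y" and "C \<in> left_cosets b"
  shows "C = (\<lambda>\<beta>. transversal_section (left_cosets b) y C + \<beta>) ` b"
  using left_coset_eq[OF assms(1,3)] transversal_section_mem[OF assms(2,3)] by blast

lemma section_of_map_in_sections:
  assumes b: "subgrp b" and y: "transversal (left_cosets b) y" and F: "F \<in> y \<rightarrow>\<^sub>E b"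
  shows "section_of_map (left_cosets b) y F \<in> sections (left_cosets b)"
proof -
  let ?\<tau> = "transversal_section (left_cosets b) y"
  have "?\<tau> C + F (?\<tau> C) \<in> C" if C: "C \<in> left_cosets b" for C
  proof -
    have "F (?\<tau> C) \<in> b"
      using F transversal_section_mem[OF y C] by blast
    then have "?\<tau> C + F (?\<tau> C) \<in> (\<lambda>\<beta>. ?\<tau> C + \<beta>) ` b"
      by (simp add: mem_left_coset_iff)
    then show ?thesis
      by (simp only: left_coset_transversal_section[OF b y C, symmetric])
  qed
  then show ?thesis
    by (simp add: sections_def section_of_map_def)
qed

lemma map_of_section_in_PiE:
  assumes "subgrp b" and "\<sigma> \<in> sections (left_cosets b)"
  shows "map_of_section b y \<sigma> \<in> y \<rightarrow>\<^sub>E b"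
proof -
  have "- \<eta> + \<sigma> ((\<lambda>\<beta>. \<eta> + \<beta>) ` b) \<in> b" for \<eta>
    using section_in_class[OF assms(2) left_coset_mem_left_cosets(1)[OF assms(1)]] mem_left_coset_iff
    by blast
  then show ?thesis
    by (simp add: map_of_section_def)
qed

lemma bij_betw_section_of_map:
  assumes b: "subgrp b" and y: "transversal (left_cosets b) y"
  shows "bij_betw (section_of_map (left_cosets b) y) (y \<rightarrow>\<^sub>E b) (sections (left_cosets b))"
proof (rule bij_betwI[where g = "map_of_section b y"])
  show "section_of_map (left_cosets b) y \<in> (y \<rightarrow>\<^sub>E b) \<rightarrow> sections (left_cosets b)"
    using section_of_map_in_sections[OF b y] by blast
  show "map_of_section b y \<in> sections (left_cosets b) \<rightarrow> (y \<rightarrow>\<^sub>E b)"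
    using map_of_section_in_PiE[OF b] by blast
  show "map_of_section b y (section_of_map (left_cosets b) y F) = F" if "F \<in> y \<rightarrow>\<^sub>E b" for F
  proof
    fix \<eta>
    show "map_of_section b y (section_of_map (left_cosets b) y F) \<eta> = F \<eta>"
      using that left_coset_mem_left_cosets(1)[OF b] transversal_section_left_coset[OF b y]
      by (cases "\<eta> \<in> y") (auto simp: map_of_section_def section_of_map_def)
  qed
  show "section_of_map (left_cosets b) y (map_of_section b y \<sigma>) = \<sigma>" if "\<sigma> \<in> sections (left_cosets b)" for \<sigma>
  proof
    fix C
    show "section_of_map (left_cosets b) y (map_of_section b y \<sigma>) C = \<sigma> C"
      using that transversal_section_mem[OF y] left_coset_transversal_section[OF b y, symmetric]
      by (cases "C \<in> left_cosets b") (auto simp: map_of_section_def section_of_map_def sections_def)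
  qed
qed

lemma torsor_iso_maps_left_sections:
  assumes "subgrp b" and "transversal (left_cosets b) y"
  shows "torsor_iso (y \<rightarrow>\<^sub>E b) (pointwise_law y)
    (sections (left_cosets b)) (pointwise_law (left_cosets b)) (section_of_map (left_cosets b) y)"
  unfolding torsor_iso_def
  using bij_betw_section_of_map[OF assms] section_of_map_pointwise_law[OF assms(2)] by blast

lemma torsor_on_maps_into_subgrp:
  assumes "subgrp b"
  shows "torsor_on (y \<rightarrow>\<^sub>E b) (pointwise_law y)"
proof (rule torsor_on_pointwise_law)
  show "y \<rightarrow>\<^sub>E b \<subseteq> extensional y"
    by (auto simp: PiE_def)
  fix F F' F'' assume "F \<in> y \<rightarrow>\<^sub>E b" "F' \<in> y \<rightarrow>\<^sub>E b" "F'' \<in> y \<rightarrow>\<^sub>E b"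
  then show "pointwise_law y F F' F'' \<in> y \<rightarrow>\<^sub>E b"
    by (auto simp: pointwise_law_def intro!: subgrp_diff_add[OF assms])
qed

lemma torsor_iso_maps_complements:
  assumes "subgrp b" and "top y b"
  shows "torsor_iso (y \<rightarrow>\<^sub>E b) (pointwise_law y) {x. top x b} (Sigma_law b)
    (\<lambda>F. {\<eta> + F \<eta> | \<eta>. \<eta> \<in> y})"
proof -
  have y: "transversal (left_cosets b) y"
    using assms transversal_left_cosets_iff_top by blast
  have "(\<lambda>\<sigma>. \<sigma> ` left_cosets b) \<circ> section_of_map (left_cosets b) y = (\<lambda>F. {\<eta> + F \<eta> | \<eta>. \<eta> \<in> y})"
    using image_section_of_map[OF y] by (simp add: comp_def)
  then show ?thesis
    using torsor_iso_comp[OF torsor_iso_maps_left_sections[OF assms(1) y]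
        torsor_iso_left_sections_complements[OF assms(1)]]
    by simp
qed

lemma ex_torsor_law_right_complements:
  assumes "subgrp b"
  shows "\<exists>m. torsor_on {x. top b x} m
    \<and> torsor_iso (sections (right_cosets b)) (pointwise_law (right_cosets b))
        {x. top b x} m (\<lambda>\<sigma>. \<sigma> ` right_cosets b)"
proof -
  have "{x. top b x} = Collect (transversal (right_cosets b))"
    using transversal_right_cosets_iff_top[OF assms] by blast
  then show ?thesis
    using torsor_iso_transfer[OF torsor_on_right_sections[OF assms]
        bij_betw_image_sections[OF partition_on_right_cosets[OF assms]]]
    by metis
qed

theorem theorem5p1:
  fixes b y :: "'a::group_add set"
  assumes "subgrp b" and "top y b"
  shows "(\<forall>x\<in>{x. top x b}. \<forall>u\<in>{x. top x b}. \<forall>z\<in>{x. top x b}.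
            Sigma_law b x u z \<in> {x. top x b})
    \<and> torsor_on {x. top x b} (Sigma_law b)
    \<and> torsor_on (sections (left_cosets b)) (pointwise_law (left_cosets b))
    \<and> torsor_iso (sections (left_cosets b)) (pointwise_law (left_cosets b))
                 {x. top x b} (Sigma_law b) (\<lambda>\<sigma>. \<sigma> ` left_cosets b)
    \<and> torsor_on (y \<rightarrow>\<^sub>E b) (pointwise_law y)
    \<and> torsor_iso (y \<rightarrow>\<^sub>E b) (pointwise_law y) {x. top x b} (Sigma_law b)
                 (\<lambda>F. {\<eta> + F \<eta> | \<eta>. \<eta> \<in> y})
    \<and> torsor_on (sections (right_cosets b)) (pointwise_law (right_cosets b))
    \<and> (\<exists>m. torsor_on {x. top b x} m
         \<and> torsor_iso (sections (right_cosets b)) (pointwise_law (right_cosets b))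
                      {x. top b x} m (\<lambda>\<sigma>. \<sigma> ` right_cosets b))"
proof -
  note sections_left = torsor_on_left_sections[OF assms(1)]
  note iso_sections = torsor_iso_left_sections_complements[OF assms(1)]
  have complements: "torsor_on {x. top x b} (Sigma_law b)"
    by (rule torsor_on_iso_image[OF sections_left iso_sections])
  then have closed: "\<forall>x\<in>{x. top x b}. \<forall>u\<in>{x. top x b}. \<forall>z\<in>{x. top x b}.
      Sigma_law b x u z \<in> {x. top x b}"
    unfolding torsor_on_def by (elim conjE)
  show ?thesis
    using closed complements sections_left iso_sections torsor_on_maps_into_subgrp[OF assms(1)]
      torsor_iso_maps_complements[OF assms] torsor_on_right_sections[OF assms(1)]
      ex_torsor_law_right_complements[OF assms(1)]
    by blast
qed

end
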